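(* Let $G$ be a finite $4$-valent graph (loops and multiple edges allowed) embedded in the plane, and let $P$ be a face (polygon) of this embedding. Then no two sides of $P$ are the same edge of $G$; that is, no edge of $G$ occurs twice in the boundary of $P$.
   Context: A polygon in a planar graph is a face of the planar embedding; its sides are the edges traversed along its boundary. *)

theory Defs
  imports Main
begin

text \<open>A map is given by a finite set of
darts D (half-edges), a fixed-point-free involution alpha on D pairing the two
darts of each edge (a loop also has two darts), and a permutation sigma of D whose
cycles list the darts around each vertex in the cyclic order of the embedding.
Vertices are sigma-orbits, edges are alpha-orbits, faces (polygons) are orbits
of the face permutation sigma o alpha; a face's sides are the edges of its darts
in the order of the boundary walk.\<close>

definition orbit :: "('a \<Rightarrow> 'a) \<Rightarrow> 'a \<Rightarrow> 'a set" where
  "orbit f x = {(f ^^ n) x | n. True}"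

definition comb_map :: "'a set \<Rightarrow> ('a \<Rightarrow> 'a) \<Rightarrow> ('a \<Rightarrow> 'a) \<Rightarrow> bool" where
  "comb_map D \<alpha> \<sigma> \<longleftrightarrow> finite D \<and> bij_betw \<sigma> D D \<and>
     (\<forall>d\<in>D. \<alpha> d \<in> D \<and> \<alpha> (\<alpha> d) = d \<and> \<alpha> d \<noteq> d)"

definition map_vertices :: "'a set \<Rightarrow> ('a \<Rightarrow> 'a) \<Rightarrow> 'a set set" where
  "map_vertices D \<sigma> = (\<lambda>d. orbit \<sigma> d) ` D"

definition dart_edge :: "('a \<Rightarrow> 'a) \<Rightarrow> 'a \<Rightarrow> 'a set" where
  "dart_edge \<alpha> d = {d, \<alpha> d}"

definition map_edges :: "'a set \<Rightarrow> ('a \<Rightarrow> 'a) \<Rightarrow> 'a set set" where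
  "map_edges D \<alpha> = dart_edge \<alpha> ` D"

definition face_perm :: "('a \<Rightarrow> 'a) \<Rightarrow> ('a \<Rightarrow> 'a) \<Rightarrow> 'a \<Rightarrow> 'a" where
  "face_perm \<alpha> \<sigma> = \<sigma> \<circ> \<alpha>"

definition map_faces :: "'a set \<Rightarrow> ('a \<Rightarrow> 'a) \<Rightarrow> ('a \<Rightarrow> 'a) \<Rightarrow> 'a set set" where
  "map_faces D \<alpha> \<sigma> = (\<lambda>d. orbit (face_perm \<alpha> \<sigma>) d) ` D"

definition map_conn :: "'a set \<Rightarrow> ('a \<Rightarrow> 'a) \<Rightarrow> ('a \<Rightarrow> 'a) \<Rightarrow> ('a \<times> 'a) set" where
  "map_conn D \<alpha> \<sigma> = ({(x, \<alpha> x) | x. x \<in> D} \<union> {(x, \<sigma> x) | x. x \<in> D}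
                       \<union> {(\<alpha> x, x) | x. x \<in> D} \<union> {(\<sigma> x, x) | x. x \<in> D})\<^sup>*"

definition map_components :: "'a set \<Rightarrow> ('a \<Rightarrow> 'a) \<Rightarrow> ('a \<Rightarrow> 'a) \<Rightarrow> 'a set set" where
  "map_components D \<alpha> \<sigma> = D // map_conn D \<alpha> \<sigma>"

text \<open>Plane (genus 0) map: every connected component is spherical, i.e.
V - E + F = 2 * (number of components).\<close>
definition plane_map :: "'a set \<Rightarrow> ('a \<Rightarrow> 'a) \<Rightarrow> ('a \<Rightarrow> 'a) \<Rightarrow> bool" where
  "plane_map D \<alpha> \<sigma> \<longleftrightarrow> comb_map D \<alpha> \<sigma> \<and>
     int (card (map_vertices D \<sigma>)) - int (card (map_edges D \<alpha>)) + int (card (map_faces D \<alpha> \<sigma>))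
       = 2 * int (card (map_components D \<alpha> \<sigma>))"

definition four_valent :: "'a set \<Rightarrow> ('a \<Rightarrow> 'a) \<Rightarrow> bool" where
  "four_valent D \<sigma> \<longleftrightarrow> (\<forall>v\<in>map_vertices D \<sigma>. card v = 4)"

end

theory Submission
  imports Defs "HOL-Combinatorics.Transposition"
begin

text \<open>Suppose both darts \<open>a\<close> and \<open>\<alpha> a\<close> of an edge lie on one face. Cut the edge by replacing
  \<open>\<alpha>\<close> with \<open>\<alpha> \<circ> transpose a (\<alpha> a)\<close>, which fixes both darts. This adds one \<open>\<alpha>\<close>-cycle and, as
  multiplying a permutation by a transposition of two points of one cycle splits that cycle, it
  splits the face in two. For any two permutations \<open>\<sigma>, \<alpha>\<close> of a finite set the Euler inequality
  \<open>V + E + F \<le> |D| + 2 C\<close> holds (induction on the number of non-fixed points of \<open>\<alpha>\<close>, cutting one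
  edge at a time); applied to the cut map and compared with Euler's formula for the plane map, it
  shows that the cut increases the number of components: the edge is a bridge. But a graph all of
  whose vertices have even degree has no bridge: after the cut, the component \<open>K\<close> of \<open>a\<close> is a union
  of vertices, so \<open>|K|\<close> is even, while \<open>K - {a}\<close> is a union of edges, so \<open>|K|\<close> is odd.\<close>

lemma funpow_in_orbit [simp]: "(f ^^ n) x \<in> orbit f x"
  by (auto simp: orbit_def)

lemma self_in_orbit [simp]: "x \<in> orbit f x"
  using funpow_in_orbit [of 0] by simp

lemma orbitE:
  assumes "y \<in> orbit f x"
  obtains n where "y = (f ^^ n) x"
  using assms by (auto simp: orbit_def)

lemma apply_in_orbit: "y \<in> orbit f x \<Longrightarrow> f y \<in> orbit f x"
  by (metis orbitE funpow.simps(2) o_apply funpow_in_orbit)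

lemma orbit_subset:
  assumes "x \<in> S" and "\<And>y. y \<in> S \<Longrightarrow> f y \<in> S"
  shows "orbit f x \<subseteq> S"
proof
  fix y assume "y \<in> orbit f x"
  then obtain n where "y = (f ^^ n) x" by (rule orbitE)
  moreover have "(f ^^ n) x \<in> S" for n by (induction n) (simp_all add: assms)
  ultimately show "y \<in> S" by simp
qed

lemma orbit_trans: "y \<in> orbit f x \<Longrightarrow> orbit f y \<subseteq> orbit f x"
  by (rule orbit_subset) (auto intro: apply_in_orbit)

lemma orbit_cong:
  assumes "\<And>y. y \<in> orbit f x \<Longrightarrow> g y = f y"
  shows "orbit g x = orbit f x"
proof -
  have "(g ^^ n) x = (f ^^ n) x" for n
    by (induction n) (simp_all add: assms)
  then show ?thesis by (simp add: orbit_def)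
qed

lemma orbit_involution: "\<alpha> (\<alpha> d) = d \<Longrightarrow> orbit \<alpha> d = {d, \<alpha> d}"
  by (intro equalityI orbit_subset) (auto intro: apply_in_orbit)

definition orbits :: "'a set \<Rightarrow> ('a \<Rightarrow> 'a) \<Rightarrow> 'a set set" where
  "orbits D f = orbit f ` D"

lemma orbits_avoiding_subset:
  assumes "\<And>y. y \<noteq> a \<Longrightarrow> y \<noteq> b \<Longrightarrow> g y = f y"
  shows "{C \<in> orbits D f. a \<notin> C \<and> b \<notin> C} \<subseteq> {C \<in> orbits D g. a \<notin> C \<and> b \<notin> C}"
proof
  fix C assume "C \<in> {C \<in> orbits D f. a \<notin> C \<and> b \<notin> C}"
  then obtain x where x: "x \<in> D" "C = orbit f x" "a \<notin> C" "b \<notin> C"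
    by (auto simp: orbits_def)
  then have "orbit g x = orbit f x"
    by (intro orbit_cong assms) auto
  with x show "C \<in> {C \<in> orbits D g. a \<notin> C \<and> b \<notin> C}"
    by (auto simp: orbits_def)
qed

locale finite_perm =
  fixes D :: "'a set" and f :: "'a \<Rightarrow> 'a"
  assumes finite: "finite D" and bij: "bij_betw f D D"
begin

lemma image_subset: "f ` D \<subseteq> D"
  using bij by (simp add: bij_betw_def)

lemma orbit_subset_D: "x \<in> D \<Longrightarrow> orbit f x \<subseteq> D"
  using image_subset by (intro orbit_subset) auto

lemma finite_orbits: "finite (orbits D f)"
  using finite by (simp add: orbits_def)

lemma funpow_returns:
  assumes "x \<in> D"
  obtains n where "0 < n" "(f ^^ n) x = x"
proof -
  have "range (\<lambda>n. (f ^^ n) x) \<subseteq> D"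
    using orbit_subset_D [OF assms] by auto
  then have "\<not> inj (\<lambda>n. (f ^^ n) x)"
    using finite finite_subset finite_imageD infinite_UNIV_nat by blast
  then obtain i j where "i < j" "(f ^^ i) x = (f ^^ j) x"
    by (metis (no_types, lifting) injI linorder_neqE_nat)
  then have "(f ^^ i) ((f ^^ (j - i)) x) = (f ^^ i) x"
    by (metis funpow_add le_add_diff_inverse less_imp_le o_apply)
  moreover have "inj_on (f ^^ i) D" and "(f ^^ (j - i)) x \<in> D"
    using bij_betw_funpow [OF bij] assms by (auto simp: bij_betw_def)
  ultimately have "(f ^^ (j - i)) x = x"
    using assms by (auto dest: inj_onD)
  with \<open>i < j\<close> show thesis by (intro that) auto
qed

lemma minimal_period:
  assumes "x \<in> D"
  obtains p where "0 < p" "(f ^^ p) x = x" "\<And>k. 0 < k \<Longrightarrow> k < p \<Longrightarrow> (f ^^ k) x \<noteq> x"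
proof -
  obtain n where "0 < n \<and> (f ^^ n) x = x"
    using funpow_returns [OF assms] by blast
  then obtain p where "0 < p \<and> (f ^^ p) x = x" "\<forall>k<p. \<not> (0 < k \<and> (f ^^ k) x = x)"
    using exists_least_iff [of "\<lambda>n. 0 < n \<and> (f ^^ n) x = x"] by blast
  then show thesis by (intro that) auto
qed

lemma orbit_sym:
  assumes "x \<in> D" and "y \<in> orbit f x"
  shows "x \<in> orbit f y"
proof -
  obtain m where m: "y = (f ^^ m) x" using assms(2) by (rule orbitE)
  obtain p where p: "0 < p" "(f ^^ p) x = x" using funpow_returns [OF assms(1)] .
  have "p * m - m + m = p * m"
    using p(1) by (simp add: le_add_diff_inverse2)
  then have "(f ^^ (p * m - m)) y = (f ^^ (p * m)) x"
    by (metis m funpow_add o_apply)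
  also have "\<dots> = x"
    using funpow_mod_eq [OF p(2), where m = "p * m"] by simp
  finally show ?thesis by (metis funpow_in_orbit)
qed

lemma orbit_eq: "x \<in> D \<Longrightarrow> y \<in> orbit f x \<Longrightarrow> orbit f y = orbit f x"
  by (meson orbit_sym orbit_trans subset_antisym)

lemma orbitsD:
  assumes "C \<in> orbits D f" and "y \<in> C"
  shows "y \<in> D" and "orbit f y = C"
proof -
  obtain x where "x \<in> D" and "C = orbit f x"
    using assms(1) by (auto simp: orbits_def)
  then show "y \<in> D" and "orbit f y = C"
    using assms(2) orbit_subset_D orbit_eq by blast+
qed

lemma card_eq_sum_card_orbits:
  assumes "K \<subseteq> D" and "f ` K \<subseteq> K"
  shows "card K = (\<Sum>C \<in> orbit f ` K. card C)"
proof -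
  have "orbit f x \<subseteq> K" if "x \<in> K" for x
    by (rule orbit_subset) (use that assms(2) in auto)
  then have "\<Union> (orbit f ` K) = K"
    by (intro equalityI) (auto intro: self_in_orbit)
  moreover have "pairwise disjnt (orbit f ` K)"
    unfolding pairwise_def disjnt_def using assms(1) orbit_eq by (blast intro: sym)
  moreover have "finite C" if "C \<in> orbit f ` K" for C
    using that assms(1) orbit_subset_D finite finite_subset by blast
  ultimately show ?thesis
    using card_Union_disjoint [of "orbit f ` K"] by simp
qed

lemma card_eq_mult_card_orbits:
  assumes "K \<subseteq> D" and "f ` K \<subseteq> K" and "\<And>x. x \<in> K \<Longrightarrow> card (orbit f x) = k"
  shows "card K = k * card (orbit f ` K)"
proof -
  have "(\<Sum>C \<in> orbit f ` K. card C) = (\<Sum>C \<in> orbit f ` K. k)"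
    using assms(3) by (intro sum.cong) auto
  then show ?thesis
    using card_eq_sum_card_orbits [OF assms(1,2)] by simp
qed

lemma comp_transpose:
  assumes "a \<in> D" and "b \<in> D"
  shows "finite_perm D (f \<circ> transpose a b)"
  using assms finite bij_betw_trans [OF _ bij, of "transpose a b"]
  by unfold_locales auto

lemma card_orbits_split:
  assumes "a \<in> D" and "b \<in> D"
  shows "card (orbits D f) = card {C \<in> orbits D f. a \<notin> C \<and> b \<notin> C} + (if b \<in> orbit f a then 1 else 2)"
proof -
  let ?A = "{C \<in> orbits D f. a \<notin> C \<and> b \<notin> C}"
  have "C \<in> ?A \<union> {orbit f a, orbit f b}" if C: "C \<in> orbits D f" for C
  proof -
    obtain x where "x \<in> D" "C = orbit f x"
      using C by (auto simp: orbits_def)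
    then show ?thesis
      using orbit_eq [of x a] orbit_eq [of x b] C by auto
  qed
  then have "orbits D f = ?A \<union> {orbit f a, orbit f b}"
    using assms by (auto simp: orbits_def)
  moreover have "card (?A \<union> {orbit f a, orbit f b}) = card ?A + card {orbit f a, orbit f b}"
    using finite_orbits by (intro card_Un_disjoint) auto
  moreover have "card {orbit f a, orbit f b} = (if b \<in> orbit f a then 1 else 2)"
  proof (cases "b \<in> orbit f a")
    case True
    then show ?thesis using orbit_eq [OF assms(1) True] by simp
  next
    case False
    then have "orbit f a \<noteq> orbit f b" by (metis self_in_orbit)
    with False show ?thesis by simp
  qed
  ultimately show ?thesis
    by simp
qed

lemma orbit_comp_transpose_merge:
  assumes "a \<in> D" and "b \<in> D" and "b \<notin> orbit f a"
  shows "b \<in> orbit (f \<circ> transpose a b) a"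
proof -
  let ?g = "f \<circ> transpose a b"
  obtain p where p: "0 < p" "(f ^^ p) b = b" "\<And>k. 0 < k \<Longrightarrow> k < p \<Longrightarrow> (f ^^ k) b \<noteq> b"
    using minimal_period [OF assms(2)] by blast
  have "a \<notin> orbit f b"
    using orbit_sym [OF assms(2)] assms(3) by blast
  have "(?g ^^ Suc k) a = (f ^^ Suc k) b" if "Suc k \<le> p" for k
    using that
  proof (induction k)
    case 0
    show ?case by simp
  next
    case (Suc k)
    have "(f ^^ Suc k) b \<noteq> b"
      using p(3) [of "Suc k"] Suc.prems by (meson Suc_le_lessD zero_less_Suc)
    moreover have "(f ^^ Suc k) b \<noteq> a"
      using \<open>a \<notin> orbit f b\<close> funpow_in_orbit by metis
    ultimately show ?case
      using Suc by simp
  qed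
  then have "(?g ^^ p) a = b"
    using p(1,2) by (metis Suc_pred le_refl)
  then show ?thesis
    by (metis funpow_in_orbit)
qed

lemma orbit_comp_transpose_split:
  assumes "a \<in> D" and "a \<noteq> b" and "b \<in> orbit f a"
  shows "b \<notin> orbit (f \<circ> transpose a b) a"
proof -
  let ?g = "f \<circ> transpose a b"
  obtain p where p: "0 < p" "(f ^^ p) a = a" "\<And>k. 0 < k \<Longrightarrow> k < p \<Longrightarrow> (f ^^ k) a \<noteq> a"
    using minimal_period [OF assms(1)] by blast
  have inj: "inj_on (\<lambda>k. (f ^^ k) a) {0..<p}"
    using p by (intro inj_on_funpow_least)
  obtain n where "b = (f ^^ n) a"
    using assms(3) by (rule orbitE)
  define m where "m = n mod p"
  have b: "b = (f ^^ m) a"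
    using funpow_mod_eq [OF p(2)] \<open>b = (f ^^ n) a\<close> by (simp add: m_def)
  have "m < p"
    using p(1) by (simp add: m_def)
  have "m \<noteq> 0"
    using b assms(2) by (metis funpow_0)
  \<comment> \<open>the arc \<open>f\<^sup>m\<^sup>+\<^sup>1 a, \<dots>, f\<^sup>p a = a\<close> of the cycle is closed under \<open>?g\<close> and misses \<open>b\<close>\<close>
  define S where "S = (\<lambda>j. (f ^^ j) a) ` {Suc m..p}"
  have "b \<notin> S"
  proof
    assume "b \<in> S"
    then obtain j where j: "Suc m \<le> j" "j \<le> p" "(f ^^ j) a = (f ^^ m) a"
      by (auto simp: S_def b)
    show False
    proof (cases "j = p")
      case True
      then show False using j(3) p(2) p(3) [of m] \<open>m < p\<close> \<open>m \<noteq> 0\<close> by simp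
    next
      case False
      then show False using j \<open>m < p\<close> inj by (auto dest: inj_onD)
    qed
  qed
  moreover have "orbit ?g a \<subseteq> S"
  proof (rule orbit_subset)
    show "a \<in> S"
      unfolding S_def by (rule image_eqI [where x = p]) (use p(2) \<open>m < p\<close> in auto)
  next
    fix y assume "y \<in> S"
    then obtain j where j: "Suc m \<le> j" "j \<le> p" "y = (f ^^ j) a"
      by (auto simp: S_def)
    show "?g y \<in> S"
    proof (cases "j = p")
      case True
      then have "?g y = (f ^^ Suc m) a"
        using p(2) j(3) b by simp
      then show ?thesis
        unfolding S_def by (rule image_eqI) (use \<open>m < p\<close> in auto)
    next
      case False
      then have "y \<noteq> a"
        using j p(3) by auto
      moreover have "y \<noteq> b"
        using j False b \<open>m < p\<close> inj by (auto dest: inj_onD)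
      ultimately have "?g y = (f ^^ Suc j) a"
        using j(3) by simp
      then show ?thesis
        unfolding S_def by (rule image_eqI) (use j False in auto)
    qed
  qed
  ultimately show ?thesis
    by blast
qed

lemma card_orbits_comp_transpose:
  assumes "a \<in> D" and "b \<in> D" and "a \<noteq> b"
  shows "b \<in> orbit f a \<Longrightarrow> card (orbits D (f \<circ> transpose a b)) = card (orbits D f) + 1"
    and "b \<notin> orbit f a \<Longrightarrow> card (orbits D f) = card (orbits D (f \<circ> transpose a b)) + 1"
proof -
  let ?g = "f \<circ> transpose a b"
  interpret g: finite_perm D ?g
    using comp_transpose [OF assms(1,2)] .
  have "{C \<in> orbits D ?g. a \<notin> C \<and> b \<notin> C} = {C \<in> orbits D f. a \<notin> C \<and> b \<notin> C}"
    by (intro equalityI orbits_avoiding_subset) auto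
  then have "card (orbits D ?g) = card {C \<in> orbits D f. a \<notin> C \<and> b \<notin> C} + (if b \<in> orbit ?g a then 1 else 2)"
    using g.card_orbits_split [OF assms(1,2)] by simp
  then show "b \<in> orbit f a \<Longrightarrow> card (orbits D ?g) = card (orbits D f) + 1"
    and "b \<notin> orbit f a \<Longrightarrow> card (orbits D f) = card (orbits D ?g) + 1"
    using card_orbits_split [OF assms(1,2)] orbit_comp_transpose_split [OF assms(1,3)]
      orbit_comp_transpose_merge [OF assms(1,2)] by auto
qed

end

lemma finite_perm_comp:
  assumes "finite_perm D f" and "finite_perm D g"
  shows "finite_perm D (f \<circ> g)"
  using assms bij_betw_trans by (auto simp: finite_perm_def)

lemma equiv_UNIVD:
  assumes "equiv UNIV R"
  shows "(x, x) \<in> R" and "(x, y) \<in> R \<Longrightarrow> (y, x) \<in> R"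
    and "(x, y) \<in> R \<Longrightarrow> (y, z) \<in> R \<Longrightarrow> (x, z) \<in> R"
  using assms equiv_class_self [OF assms] by (auto simp: equiv_def dest: symD transD)

lemma rtrancl_subset_equiv:
  assumes "equiv UNIV S" and "r \<subseteq> S"
  shows "r\<^sup>* \<subseteq> S"
proof clarify
  note S = equiv_UNIVD [OF assms(1)]
  fix x y assume "(x, y) \<in> r\<^sup>*"
  then show "(x, y) \<in> S"
    by induction (use S(1,3) assms(2) in blast)+
qed

lemma rtrancl_Un_pair_cases:
  assumes "equiv UNIV R" and "(x, y) \<in> (R \<union> {(a, b), (b, a)})\<^sup>*"
  shows "(x, y) \<in> R \<or> x \<in> R `` {a, b} \<and> y \<in> R `` {a, b}"
  using assms(2)
proof (induction rule: rtrancl_induct)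
  case base
  show ?case using equiv_UNIVD(1) [OF assms(1)] by simp
next
  case (step y z)
  note R = equiv_UNIVD [OF assms(1)]
  from step.hyps(2) show ?case
  proof
    assume "(y, z) \<in> R"
    with step.IH show ?case
      using R(3) by blast
  next
    assume "(y, z) \<in> {(a, b), (b, a)}"
    then have "y \<in> {a, b}" and "z \<in> {a, b}"
      by auto
    then have "x \<in> R `` {a, b}" and "z \<in> R `` {a, b}"
      using step.IH R(1,2) by blast+
    then show ?case
      by blast
  qed
qed

lemma rtrancl_Un_pair_eq:
  assumes "equiv UNIV R" and "(a, b) \<in> R"
  shows "(R \<union> {(a, b), (b, a)})\<^sup>* = R"
proof
  show "R \<subseteq> (R \<union> {(a, b), (b, a)})\<^sup>*"
    by auto
  show "(R \<union> {(a, b), (b, a)})\<^sup>* \<subseteq> R"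
    using assms equiv_UNIVD(2) [OF assms] by (intro rtrancl_subset_equiv) auto
qed

lemma card_quotient_le_join_pair:
  assumes "finite D" and "equiv UNIV R"
  shows "card (D // R) \<le> card (D // (R \<union> {(a, b), (b, a)})\<^sup>*) + 1"
proof -
  let ?S = "(R \<union> {(a, b), (b, a)})\<^sup>*"
  note R = equiv_UNIVD [OF assms(2)]
  let ?Q = "D // R - {R `` {b}}"
  have S_class: "?S `` (R `` {x}) = ?S `` {x}" for x
    using R(1) converse_rtrancl_into_rtrancl [of x _ "R \<union> {(a, b), (b, a)}"] by blast
  \<comment> \<open>only the classes of \<open>a\<close> and \<open>b\<close> can be merged\<close>
  have "inj_on (\<lambda>X. ?S `` X) ?Q"
  proof (rule inj_onI)
    fix X Y assume X: "X \<in> ?Q" and Y: "Y \<in> ?Q" and XY: "?S `` X = ?S `` Y"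
    obtain x y where x: "X = R `` {x}" and y: "Y = R `` {y}"
      using X Y by (auto elim!: quotientE)
    have "(x, b) \<notin> R" and "(y, b) \<notin> R"
      using X Y x y equiv_class_eq [OF assms(2)] by auto
    have "y \<in> ?S `` X"
      unfolding XY y S_class by blast
    then have "(x, y) \<in> ?S"
      unfolding x S_class by blast
    from rtrancl_Un_pair_cases [OF assms(2) this] have "(x, y) \<in> R"
    proof
      assume "x \<in> R `` {a, b} \<and> y \<in> R `` {a, b}"
      then have "(a, x) \<in> R" and "(a, y) \<in> R"
        using \<open>(x, b) \<notin> R\<close> \<open>(y, b) \<notin> R\<close> R(2) by blast+
      then show "(x, y) \<in> R"
        using R(2,3) by blast
    qed
    then show "X = Y"
      using equiv_class_eq [OF assms(2)] x y by simp
  qed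
  moreover have "?S `` X \<in> D // ?S" if "X \<in> D // R" for X
    using that by (metis S_class quotientE quotientI)
  then have "(\<lambda>X. ?S `` X) ` ?Q \<subseteq> D // ?S"
    by blast
  ultimately have "card ?Q \<le> card (D // ?S)"
    using assms(1) by (intro card_inj_on_le) (auto simp: quotient_def)
  moreover have "card (D // R) \<le> card ?Q + 1"
    by (auto simp: card_Diff_singleton_if)
  ultimately show ?thesis
    by linarith
qed

lemma equiv_map_conn: "equiv UNIV (map_conn D \<alpha> \<sigma>)"
  unfolding map_conn_def
  by (intro equivI refl_rtrancl sym_rtrancl trans_rtrancl) (auto simp: sym_def)

lemma map_conn_refl [simp]: "(x, x) \<in> map_conn D \<alpha> \<sigma>"
  unfolding map_conn_def by simp

lemma map_conn_sym: "(x, y) \<in> map_conn D \<alpha> \<sigma> \<Longrightarrow> (y, x) \<in> map_conn D \<alpha> \<sigma>"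
  by (rule equiv_UNIVD(2) [OF equiv_map_conn])

lemma map_conn_trans:
  "(x, y) \<in> map_conn D \<alpha> \<sigma> \<Longrightarrow> (y, z) \<in> map_conn D \<alpha> \<sigma> \<Longrightarrow> (x, z) \<in> map_conn D \<alpha> \<sigma>"
  unfolding map_conn_def by (rule rtrancl_trans)

lemma map_conn_step:
  assumes "x \<in> D"
  shows "(x, \<alpha> x) \<in> map_conn D \<alpha> \<sigma>" and "(x, \<sigma> x) \<in> map_conn D \<alpha> \<sigma>"
  using assms unfolding map_conn_def by blast+

lemma map_conn_least:
  assumes "equiv UNIV S" and "\<And>x. x \<in> D \<Longrightarrow> (x, \<alpha> x) \<in> S \<and> (x, \<sigma> x) \<in> S"
  shows "map_conn D \<alpha> \<sigma> \<subseteq> S"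
  unfolding map_conn_def
  using assms equiv_UNIVD(2) [OF assms(1)] by (intro rtrancl_subset_equiv) blast+

lemma map_conn_class_closed:
  assumes "\<alpha> ` D \<subseteq> D" and "\<sigma> ` D \<subseteq> D" and "x \<in> D" and "y \<in> map_conn D \<alpha> \<sigma> `` {x}"
  shows "y \<in> D" and "\<alpha> y \<in> map_conn D \<alpha> \<sigma> `` {x}" and "\<sigma> y \<in> map_conn D \<alpha> \<sigma> `` {x}"
proof -
  have "equiv UNIV (D \<times> D \<union> Id)"
    by (intro equivI) (auto simp: refl_on_def sym_def trans_def)
  then have "map_conn D \<alpha> \<sigma> \<subseteq> D \<times> D \<union> Id"
    using assms(1,2) by (intro map_conn_least) auto
  then show "y \<in> D"
    using assms(3,4) by auto
  have "(x, y) \<in> map_conn D \<alpha> \<sigma>"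
    using assms(4) by simp
  then show "\<alpha> y \<in> map_conn D \<alpha> \<sigma> `` {x}" and "\<sigma> y \<in> map_conn D \<alpha> \<sigma> `` {x}"
    using map_conn_trans [OF _ map_conn_step(1) [OF \<open>y \<in> D\<close>]]
      map_conn_trans [OF _ map_conn_step(2) [OF \<open>y \<in> D\<close>]] by simp_all
qed

lemma map_conn_face_orbit:
  assumes "\<alpha> ` D \<subseteq> D" and "\<sigma> ` D \<subseteq> D" and "x \<in> D" and "y \<in> orbit (\<sigma> \<circ> \<alpha>) x"
  shows "(x, y) \<in> map_conn D \<alpha> \<sigma>"
proof -
  note closed = map_conn_class_closed [OF assms(1-3)]
  have "orbit (\<sigma> \<circ> \<alpha>) x \<subseteq> map_conn D \<alpha> \<sigma> `` {x}"
  proof (rule orbit_subset)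
    fix y assume "y \<in> map_conn D \<alpha> \<sigma> `` {x}"
    then show "(\<sigma> \<circ> \<alpha>) y \<in> map_conn D \<alpha> \<sigma> `` {x}"
      using closed(2,3) by simp
  qed simp
  with assms(4) show ?thesis
    by blast
qed

lemma map_conn_cut_edge_subset:
  assumes "\<alpha> a \<in> D"
  shows "map_conn D (\<alpha> \<circ> transpose a (\<alpha> a)) \<sigma> \<subseteq> map_conn D \<alpha> \<sigma>"
proof (rule map_conn_least [OF equiv_map_conn], intro conjI)
  fix x assume "x \<in> D"
  show "(x, (\<alpha> \<circ> transpose a (\<alpha> a)) x) \<in> map_conn D \<alpha> \<sigma>"
  proof (cases "x = a")
    case True
    with \<open>x \<in> D\<close> have "(a, \<alpha> a) \<in> map_conn D \<alpha> \<sigma>"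
      by (simp add: map_conn_step(1))
    from map_conn_trans [OF this map_conn_step(1) [OF assms]] show ?thesis
      using True by simp
  qed (use map_conn_step(1) [OF \<open>x \<in> D\<close>] in \<open>auto simp: transpose_def\<close>)
  show "(x, \<sigma> x) \<in> map_conn D \<alpha> \<sigma>"
    using \<open>x \<in> D\<close> by (rule map_conn_step(2))
qed

lemma map_conn_cut_edge:
  assumes "a \<in> D" and "\<alpha> a \<in> D"
  defines "\<alpha>' \<equiv> \<alpha> \<circ> transpose a (\<alpha> a)"
  shows "map_conn D \<alpha> \<sigma> = (map_conn D \<alpha>' \<sigma> \<union> {(a, \<alpha> a), (\<alpha> a, a)})\<^sup>*"
proof
  let ?S = "(map_conn D \<alpha>' \<sigma> \<union> {(a, \<alpha> a), (\<alpha> a, a)})\<^sup>*"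
  have "sym (map_conn D \<alpha>' \<sigma> \<union> {(a, \<alpha> a), (\<alpha> a, a)})"
    by (auto simp: sym_def intro: map_conn_sym)
  then have equiv: "equiv UNIV ?S"
    by (intro equivI refl_rtrancl sym_rtrancl trans_rtrancl) auto
  have \<alpha>_step: "(x, \<alpha> x) \<in> ?S" if "x \<in> D" for x
  proof (cases "x = \<alpha> a")
    case True
    then have "(x, a) \<in> ?S" and "(a, \<alpha> x) \<in> ?S"
      using map_conn_step(1) [OF assms(1), where \<alpha> = \<alpha>'] by (auto simp: \<alpha>'_def)
    then show ?thesis
      by (rule rtrancl_trans)
  next
    case False
    then have "x = a \<or> \<alpha> x = \<alpha>' x"
      by (auto simp: \<alpha>'_def transpose_def)
    then show ?thesis
      using map_conn_step(1) [OF that, where \<alpha> = \<alpha>'] by auto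
  qed
  have \<sigma>_step: "(x, \<sigma> x) \<in> ?S" if "x \<in> D" for x
    using map_conn_step(2) [OF that, where \<alpha> = \<alpha>'] by blast
  show "map_conn D \<alpha> \<sigma> \<subseteq> ?S"
    by (rule map_conn_least [OF equiv]) (use \<alpha>_step \<sigma>_step in blast)
  show "?S \<subseteq> map_conn D \<alpha> \<sigma>"
  proof (rule rtrancl_subset_equiv [OF equiv_map_conn])
    have "(a, \<alpha> a) \<in> map_conn D \<alpha> \<sigma>"
      using assms(1) by (rule map_conn_step(1))
    with map_conn_cut_edge_subset [where \<alpha> = \<alpha>, OF assms(2)]
    show "map_conn D \<alpha>' \<sigma> \<union> {(a, \<alpha> a), (\<alpha> a, a)} \<subseteq> map_conn D \<alpha> \<sigma>"
      unfolding \<alpha>'_def by (auto intro: map_conn_sym)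
  qed
qed

lemma (in finite_perm) quotient_map_conn_fixed:
  assumes "\<And>x. x \<in> D \<Longrightarrow> \<alpha> x = x"
  shows "D // map_conn D \<alpha> f = orbits D f"
proof -
  let ?R = "map_conn D \<alpha> f"
  let ?S = "{(x, y). x \<in> D \<and> y \<in> orbit f x} \<union> Id"
  have equiv: "equiv UNIV ?S"
  proof (rule equivI)
    show "refl ?S"
      by (simp add: refl_on_def)
    show "sym ?S"
      using orbit_sym orbit_subset_D by (auto simp: sym_def)
    show "trans ?S"
      by (rule transI) (auto dest: orbit_trans)
  qed simp
  have "?R \<subseteq> ?S"
    by (rule map_conn_least [OF equiv]) (simp add: assms apply_in_orbit [OF self_in_orbit])
  have "?R `` {x} = orbit f x" if "x \<in> D" for x
  proof
    show "?R `` {x} \<subseteq> orbit f x"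
    proof
      fix y assume "y \<in> ?R `` {x}"
      then have "(x, y) \<in> ?S"
        using \<open>?R \<subseteq> ?S\<close> by blast
      then show "y \<in> orbit f x"
        by auto
    qed
    have "\<alpha> ` D \<subseteq> D"
      using assms by auto
    note closed = map_conn_class_closed [OF this image_subset that]
    show "orbit f x \<subseteq> ?R `` {x}"
    proof (rule orbit_subset)
      fix y assume "y \<in> ?R `` {x}"
      then show "f y \<in> ?R `` {x}"
        by (rule closed(3))
    qed simp
  qed
  then show ?thesis
    by (auto simp: quotient_def orbits_def)
qed

lemma hypermap_euler_fixpoints:
  assumes "finite_perm D \<sigma>" and fixed: "\<And>x. x \<in> D \<Longrightarrow> \<alpha> x = x"
  shows "card (orbits D \<sigma>) + card (orbits D \<alpha>) + card (orbits D (\<sigma> \<circ> \<alpha>))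
           = card D + 2 * card (D // map_conn D \<alpha> \<sigma>)"
proof -
  interpret \<sigma>: finite_perm D \<sigma> by (fact assms(1))
  have "orbit \<alpha> x = {x}" if "x \<in> D" for x
    using orbit_involution [of \<alpha> x] fixed [OF that] by simp
  then have "orbits D \<alpha> = (\<lambda>x. {x}) ` D"
    by (simp add: orbits_def)
  then have "card (orbits D \<alpha>) = card D"
    by (simp add: card_image)
  moreover have "orbit (\<sigma> \<circ> \<alpha>) x = orbit \<sigma> x" if "x \<in> D" for x
    using \<sigma>.orbit_subset_D [OF that] fixed by (intro orbit_cong) auto
  then have "orbits D (\<sigma> \<circ> \<alpha>) = orbits D \<sigma>"
    by (simp add: orbits_def)
  moreover have "D // map_conn D \<alpha> \<sigma> = orbits D \<sigma>"
    using fixed by (rule \<sigma>.quotient_map_conn_fixed)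
  ultimately show ?thesis
    by simp
qed

text \<open>Cutting an edge adds one \<open>\<alpha>\<close>-cycle. If its two darts lie on one face, that face splits
  and the connectivity is unchanged; otherwise two faces merge and at most one component is added.\<close>

lemma hypermap_euler_cut_step:
  assumes "finite_perm D \<sigma>" and "finite_perm D \<alpha>" and "a \<in> D" and "\<alpha> a \<noteq> a"
  defines "\<alpha>' \<equiv> \<alpha> \<circ> transpose a (\<alpha> a)"
  shows "card (orbits D \<alpha>) + card (orbits D (\<sigma> \<circ> \<alpha>)) + 2 * card (D // map_conn D \<alpha>' \<sigma>)
           \<le> card (orbits D \<alpha>') + card (orbits D (\<sigma> \<circ> \<alpha>')) + 2 * card (D // map_conn D \<alpha> \<sigma>)"
proof -
  interpret \<sigma>: finite_perm D \<sigma> by (fact assms(1))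
  interpret \<alpha>: finite_perm D \<alpha> by (fact assms(2))
  have b: "\<alpha> a \<in> D" "a \<noteq> \<alpha> a" "\<alpha> a \<in> orbit \<alpha> a"
    using assms(3,4) \<alpha>.image_subset apply_in_orbit [OF self_in_orbit] by auto
  interpret \<alpha>': finite_perm D \<alpha>'
    unfolding \<alpha>'_def using assms(3) b(1) by (rule \<alpha>.comp_transpose)
  interpret \<phi>': finite_perm D "\<sigma> \<circ> \<alpha>'"
    using assms(1) \<alpha>'.finite_perm_axioms by (rule finite_perm_comp)
  have E: "card (orbits D \<alpha>') = card (orbits D \<alpha>) + 1"
    unfolding \<alpha>'_def using \<alpha>.card_orbits_comp_transpose(1) [OF assms(3) b] .
  have F: "\<sigma> \<circ> \<alpha> = (\<sigma> \<circ> \<alpha>') \<circ> transpose a (\<alpha> a)"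
    by (simp add: \<alpha>'_def fun_eq_iff)
  have C: "map_conn D \<alpha> \<sigma> = (map_conn D \<alpha>' \<sigma> \<union> {(a, \<alpha> a), (\<alpha> a, a)})\<^sup>*"
    unfolding \<alpha>'_def using assms(3) b(1) by (rule map_conn_cut_edge)
  show ?thesis
  proof (cases "\<alpha> a \<in> orbit (\<sigma> \<circ> \<alpha>') a")
    case True
    with \<alpha>'.image_subset \<sigma>.image_subset assms(3) have "(a, \<alpha> a) \<in> map_conn D \<alpha>' \<sigma>"
      by (intro map_conn_face_orbit)
    then have "map_conn D \<alpha> \<sigma> = map_conn D \<alpha>' \<sigma>"
      unfolding C by (rule rtrancl_Un_pair_eq [OF equiv_map_conn])
    moreover have "card (orbits D (\<sigma> \<circ> \<alpha>)) = card (orbits D (\<sigma> \<circ> \<alpha>')) + 1"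
      unfolding F using \<phi>'.card_orbits_comp_transpose(1) [OF assms(3) b(1,2) True] .
    ultimately show ?thesis
      using E by simp
  next
    case False
    have "card (orbits D (\<sigma> \<circ> \<alpha>')) = card (orbits D (\<sigma> \<circ> \<alpha>)) + 1"
      unfolding F using \<phi>'.card_orbits_comp_transpose(2) [OF assms(3) b(1,2) False] .
    moreover have "card (D // map_conn D \<alpha>' \<sigma>) \<le> card (D // map_conn D \<alpha> \<sigma>) + 1"
      unfolding C by (rule card_quotient_le_join_pair [OF \<alpha>.finite equiv_map_conn])
    ultimately show ?thesis
      using E by simp
  qed
qed

theorem hypermap_euler_inequality:
  assumes "finite_perm D \<sigma>" and "finite_perm D \<alpha>"
  shows "card (orbits D \<sigma>) + card (orbits D \<alpha>) + card (orbits D (\<sigma> \<circ> \<alpha>))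
           \<le> card D + 2 * card (D // map_conn D \<alpha> \<sigma>)"
  using assms(2)
proof (induction "card {x \<in> D. \<alpha> x \<noteq> x}" arbitrary: \<alpha> rule: less_induct)
  case less
  interpret \<alpha>: finite_perm D \<alpha> by (fact less.prems)
  show ?case
  proof (cases "\<exists>a \<in> D. \<alpha> a \<noteq> a")
    case False
    have "card (orbits D \<sigma>) + card (orbits D \<alpha>) + card (orbits D (\<sigma> \<circ> \<alpha>))
            = card D + 2 * card (D // map_conn D \<alpha> \<sigma>)"
      by (rule hypermap_euler_fixpoints [OF assms(1)]) (use False in blast)
    then show ?thesis
      by simp
  next
    case True
    then obtain a where a: "a \<in> D" "\<alpha> a \<noteq> a"
      by blast
    let ?\<alpha>' = "\<alpha> \<circ> transpose a (\<alpha> a)"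
    have "\<alpha> a \<in> D" and "\<alpha> (\<alpha> a) \<noteq> \<alpha> a"
      using a \<alpha>.image_subset \<alpha>.bij by (auto dest: bij_betw_imp_inj_on inj_onD)
    \<comment> \<open>the dart \<open>\<alpha> a\<close> becomes a fixed point, and no new non-fixed points appear\<close>
    then have "{x \<in> D. ?\<alpha>' x \<noteq> x} \<subset> {x \<in> D. \<alpha> x \<noteq> x}"
      using a by (auto simp: transpose_def)
    then have "card (orbits D \<sigma>) + card (orbits D ?\<alpha>') + card (orbits D (\<sigma> \<circ> ?\<alpha>'))
                 \<le> card D + 2 * card (D // map_conn D ?\<alpha>' \<sigma>)"
      using \<alpha>.finite \<alpha>.comp_transpose [OF a(1) \<open>\<alpha> a \<in> D\<close>]
      by (intro less.hyps) (auto intro: psubset_card_mono)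
    then show ?thesis
      using hypermap_euler_cut_step [OF assms(1) less.prems a] by linarith
  qed
qed

lemma comb_map_finite_perm:
  assumes "comb_map D \<alpha> \<sigma>"
  shows "finite_perm D \<sigma>" and "finite_perm D \<alpha>"
proof -
  have "bij_betw \<alpha> D D"
    using assms by (intro bij_betw_byWitness [where f' = \<alpha>]) (auto simp: comb_map_def)
  then show "finite_perm D \<sigma>" and "finite_perm D \<alpha>"
    using assms by (auto simp: comb_map_def finite_perm_def)
qed

lemma comb_map_edge_orbit:
  assumes "comb_map D \<alpha> \<sigma>" and "d \<in> D"
  shows "orbit \<alpha> d = dart_edge \<alpha> d" and "card (orbit \<alpha> d) = 2"
  using assms orbit_involution [of \<alpha> d] by (auto simp: comb_map_def dart_edge_def)

lemma even_degree_no_bridge: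
  assumes "comb_map D \<alpha> \<sigma>" and "\<forall>v \<in> map_vertices D \<sigma>. even (card v)" and "a \<in> D"
  shows "(a, \<alpha> a) \<in> map_conn D (\<alpha> \<circ> transpose a (\<alpha> a)) \<sigma>"
proof (rule ccontr)
  interpret \<sigma>: finite_perm D \<sigma> by (rule comb_map_finite_perm(1) [OF assms(1)])
  interpret \<alpha>: finite_perm D \<alpha> by (rule comb_map_finite_perm(2) [OF assms(1)])
  define b where "b = \<alpha> a"
  define \<alpha>' where "\<alpha>' = \<alpha> \<circ> transpose a b"
  define K where "K = map_conn D \<alpha>' \<sigma> `` {a}"
  assume "(a, \<alpha> a) \<notin> map_conn D (\<alpha> \<circ> transpose a (\<alpha> a)) \<sigma>"
  then have "b \<notin> K"
    by (simp add: K_def \<alpha>'_def b_def)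
  have inv: "\<alpha> (\<alpha> x) = x" if "x \<in> D" for x
    using assms(1) that by (simp add: comb_map_def)
  have "b \<in> D"
    using assms(3) \<alpha>.image_subset by (auto simp: b_def)
  then have "\<alpha>' ` D \<subseteq> D"
    using \<alpha>.image_subset assms(3) by (auto simp: \<alpha>'_def transpose_def)
  note closed = map_conn_class_closed [OF this \<sigma>.image_subset assms(3), folded K_def]
  then have "K \<subseteq> D"
    by blast
  have "\<alpha> y \<in> K - {a}" if "y \<in> K - {a}" for y
  proof -
    have "y \<noteq> b" and "y \<in> D"
      using that \<open>b \<notin> K\<close> \<open>K \<subseteq> D\<close> by auto
    then have "\<alpha> y = \<alpha>' y" and "\<alpha> y \<noteq> a"
      using that inv [of y] by (auto simp: \<alpha>'_def b_def)
    with that closed(2) show ?thesis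
      by auto
  qed
  \<comment> \<open>\<open>K\<close> is a union of vertices, but \<open>K - {a}\<close> is a union of edges\<close>
  then have "card (K - {a}) = 2 * card (orbit \<alpha> ` (K - {a}))"
    using \<open>K \<subseteq> D\<close> comb_map_edge_orbit(2) [OF assms(1)] by (intro \<alpha>.card_eq_mult_card_orbits) auto
  then have "even (card (K - {a}))"
    by simp
  moreover have "card K = (\<Sum>C \<in> orbit \<sigma> ` K. card C)"
    using \<open>K \<subseteq> D\<close> closed(3) by (intro \<sigma>.card_eq_sum_card_orbits) auto
  then have "even (card K)"
    using assms(2) \<open>K \<subseteq> D\<close> by (auto simp: map_vertices_def intro!: dvd_sum)
  moreover have "a \<in> K" and "finite K"
    using \<open>K \<subseteq> D\<close> \<alpha>.finite finite_subset by (auto simp: K_def)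
  ultimately show False
    by (simp add: card_Diff_singleton)
qed

lemma plane_map_cut_edge_on_one_face:
  assumes "plane_map D \<alpha> \<sigma>" and "a \<in> D" and "\<alpha> a \<in> orbit (face_perm \<alpha> \<sigma>) a"
  shows "card (D // map_conn D \<alpha> \<sigma>) < card (D // map_conn D (\<alpha> \<circ> transpose a (\<alpha> a)) \<sigma>)"
proof -
  have map: "comb_map D \<alpha> \<sigma>"
    using assms(1) by (simp add: plane_map_def)
  interpret \<sigma>: finite_perm D \<sigma> by (rule comb_map_finite_perm(1) [OF map])
  interpret \<alpha>: finite_perm D \<alpha> by (rule comb_map_finite_perm(2) [OF map])
  interpret \<phi>: finite_perm D "\<sigma> \<circ> \<alpha>" by (rule finite_perm_comp) unfold_locales
  let ?\<alpha>' = "\<alpha> \<circ> transpose a (\<alpha> a)"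
  have b: "\<alpha> a \<in> D" "a \<noteq> \<alpha> a" "\<alpha> a \<in> orbit \<alpha> a"
    using map assms(2) apply_in_orbit [OF self_in_orbit] by (auto simp: comb_map_def)
  have E: "card (orbits D ?\<alpha>') = card (orbits D \<alpha>) + 1"
    using \<alpha>.card_orbits_comp_transpose(1) [OF assms(2) b] .
  have "\<sigma> \<circ> ?\<alpha>' = (\<sigma> \<circ> \<alpha>) \<circ> transpose a (\<alpha> a)"
    by (simp add: comp_assoc)
  then have F: "card (orbits D (\<sigma> \<circ> ?\<alpha>')) = card (orbits D (\<sigma> \<circ> \<alpha>)) + 1"
    using \<phi>.card_orbits_comp_transpose(1) [OF assms(2) b(1,2)] assms(3) by (simp add: face_perm_def)
  have "card (orbits D \<sigma>) + card (orbits D ?\<alpha>') + card (orbits D (\<sigma> \<circ> ?\<alpha>'))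
          \<le> card D + 2 * card (D // map_conn D ?\<alpha>' \<sigma>)"
    using \<sigma>.finite_perm_axioms \<alpha>.comp_transpose [OF assms(2) b(1)] by (rule hypermap_euler_inequality)
  moreover have "card D = 2 * card (orbits D \<alpha>)"
    unfolding orbits_def using comb_map_edge_orbit(2) [OF map] \<alpha>.image_subset
    by (intro \<alpha>.card_eq_mult_card_orbits) auto
  moreover have "map_edges D \<alpha> = orbits D \<alpha>"
    using comb_map_edge_orbit(1) [OF map] by (simp add: map_edges_def orbits_def)
  then have "int (card (orbits D \<sigma>)) - int (card (orbits D \<alpha>)) + int (card (orbits D (\<sigma> \<circ> \<alpha>)))
               = 2 * int (card (D // map_conn D \<alpha> \<sigma>))"
    using assms(1)
    by (simp add: plane_map_def map_vertices_def map_faces_def face_perm_def map_components_def orbits_def)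
  ultimately show ?thesis
    using E F by linarith
qed

theorem lemma2p6:
  fixes D :: "'a set" and \<alpha> \<sigma> :: "'a \<Rightarrow> 'a" and P :: "'a set"
  assumes "plane_map D \<alpha> \<sigma>"
    and "four_valent D \<sigma>"
    and "P \<in> map_faces D \<alpha> \<sigma>"
  shows "\<forall>d\<in>P. \<forall>d'\<in>P. d \<noteq> d' \<longrightarrow> dart_edge \<alpha> d \<noteq> dart_edge \<alpha> d'"
proof (intro ballI impI notI)
  fix d d' assume "d \<in> P" "d' \<in> P" "d \<noteq> d'" "dart_edge \<alpha> d = dart_edge \<alpha> d'"
  then have "d' = \<alpha> d"
    by (auto simp: dart_edge_def doubleton_eq_iff)
  have map: "comb_map D \<alpha> \<sigma>"
    using assms(1) by (simp add: plane_map_def)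
  interpret \<phi>: finite_perm D "face_perm \<alpha> \<sigma>"
    unfolding face_perm_def by (intro finite_perm_comp comb_map_finite_perm [OF map])
  have "P \<in> orbits D (face_perm \<alpha> \<sigma>)"
    using assms(3) by (simp add: map_faces_def orbits_def)
  note face = \<phi>.orbitsD [OF this \<open>d \<in> P\<close>]
  have "\<alpha> d \<in> orbit (face_perm \<alpha> \<sigma>) d"
    using face(2) \<open>d' \<in> P\<close> \<open>d' = \<alpha> d\<close> by simp
  have "\<forall>v \<in> map_vertices D \<sigma>. even (card v)"
    using assms(2) by (simp add: four_valent_def)
  with map have "(d, \<alpha> d) \<in> map_conn D (\<alpha> \<circ> transpose d (\<alpha> d)) \<sigma>"
    using \<open>d \<in> D\<close> by (rule even_degree_no_bridge)
  moreover have "\<alpha> d \<in> D"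
    using map \<open>d \<in> D\<close> by (simp add: comb_map_def)
  ultimately have "map_conn D \<alpha> \<sigma> = map_conn D (\<alpha> \<circ> transpose d (\<alpha> d)) \<sigma>"
    using map_conn_cut_edge [OF \<open>d \<in> D\<close>] rtrancl_Un_pair_eq [OF equiv_map_conn] by metis
  then show False
    using plane_map_cut_edge_on_one_face [OF assms(1) \<open>d \<in> D\<close> \<open>\<alpha> d \<in> orbit (face_perm \<alpha> \<sigma>) d\<close>]
    by simp
qed

end
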